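(* Let $\mathcal{H}=(V,E)$ be a linear hypergraph such that for every hyperedge $e\in E$ there exists a vertex $x\in e$ with $\mathrm{deg}_{\mathcal{H}}(x)\le |e|$. Then $$\mathrm{q}(\mathcal{H})\le \Delta([\mathcal{H}]_2)+1.$$
   Context: A hypergraph $\mathcal{H}=(V,E)$ has a finite vertex set $V$ and a finite set $E$ of nonempty subsets of $V$ (hyperedges). It is linear if $|e\cap e'|\le 1$ for all distinct $e,e'\in E$. The degree $\mathrm{deg}_{\mathcal{H}}(x)$ of a vertex $x$ is the number of hyperedges containing $x$. The 2-section $[\mathcal{H}]_2$ is the simple graph on $V$ in which two distinct vertices are adjacent iff some hyperedge contains both; $\Delta([\mathcal{H}]_2)$ is its maximum degree. The chromatic index $\mathrm{q}(\mathcal{H})$ is the least $k$ such that the hyperedges can be colored with $k$ colors so that any two distinct intersecting hyperedges receive different colors. *)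

theory Defs
  imports Main
begin

definition hypergraph :: "'a set \<Rightarrow> 'a set set \<Rightarrow> bool" where
  "hypergraph V E \<longleftrightarrow> finite V \<and> finite E \<and> (\<forall>e\<in>E. e \<noteq> {} \<and> e \<subseteq> V)"

definition linear_hg :: "'a set set \<Rightarrow> bool" where
  "linear_hg E \<longleftrightarrow> (\<forall>e\<in>E. \<forall>e'\<in>E. e \<noteq> e' \<longrightarrow> card (e \<inter> e') \<le> 1)"

definition hdeg :: "'a set set \<Rightarrow> 'a \<Rightarrow> nat" where
  "hdeg E x = card {e\<in>E. x \<in> e}"

definition sec2_nbrs :: "'a set \<Rightarrow> 'a set set \<Rightarrow> 'a \<Rightarrow> 'a set" where
  "sec2_nbrs V E x = {y\<in>V. y \<noteq> x \<and> (\<exists>e\<in>E. x \<in> e \<and> y \<in> e)}"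

definition max_deg_2sec :: "'a set \<Rightarrow> 'a set set \<Rightarrow> nat" where
  "max_deg_2sec V E = Max (insert 0 ((\<lambda>x. card (sec2_nbrs V E x)) ` V))"

definition proper_edge_colouring :: "'a set set \<Rightarrow> nat \<Rightarrow> ('a set \<Rightarrow> nat) \<Rightarrow> bool" where
  "proper_edge_colouring E k c \<longleftrightarrow>
     (\<forall>e\<in>E. c e < k) \<and>
     (\<forall>e\<in>E. \<forall>e'\<in>E. e \<noteq> e' \<and> e \<inter> e' \<noteq> {} \<longrightarrow> c e \<noteq> c e')"

definition chromatic_index :: "'a set set \<Rightarrow> nat" where
  "chromatic_index E = (LEAST k. \<exists>c. proper_edge_colouring E k c)"

end

theory Submission
  imports Defs
begin

text \<open>
  Write \<open>\<Delta>\<close> for the maximum degree of the 2-section. If every nonempty subfamily of edges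
  contains an edge meeting at most \<open>\<Delta>\<close> others, colouring greedily (remove such an edge,
  colour the rest, give it a free colour) uses \<open>\<Delta> + 1\<close> colours. All hypotheses pass to
  subfamilies, and the 2-section degrees can only drop, so it suffices to find one such edge.
  Take \<open>e\<close> of minimum size \<open>m\<close> and \<open>x \<in> e\<close> with \<open>deg x \<le> m\<close>. By linearity the edges
  through a vertex \<open>y\<close> meet pairwise only in \<open>y\<close>, and each has at least \<open>m\<close> vertices, so
  \<open>(m - 1) deg y \<le> \<Delta>\<close>. Summing over the \<open>m - 1\<close> vertices \<open>y \<noteq> x\<close> of \<open>e\<close> gives
  \<open>\<Sum>\<^sub>y deg y \<le> \<Delta>\<close>, and the edges meeting \<open>e\<close> number at most
  \<open>(deg x - 1) + \<Sum>\<^sub>y (deg y - 1) \<le> (m - 1) + \<Sum>\<^sub>y (deg y - 1) = \<Sum>\<^sub>y deg y\<close>.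
\<close>

definition intersecting_edges :: "'a set set \<Rightarrow> 'a set \<Rightarrow> 'a set set" where
  "intersecting_edges E e = {f\<in>E. f \<noteq> e \<and> f \<inter> e \<noteq> {}}"

lemma hypergraph_subset: "hypergraph V E \<Longrightarrow> F \<subseteq> E \<Longrightarrow> hypergraph V F"
  unfolding hypergraph_def by (auto intro: finite_subset)

lemma linear_hg_subset: "linear_hg E \<Longrightarrow> F \<subseteq> E \<Longrightarrow> linear_hg F"
  unfolding linear_hg_def by blast

lemma hdeg_mono: "finite E \<Longrightarrow> F \<subseteq> E \<Longrightarrow> hdeg F x \<le> hdeg E x"
  unfolding hdeg_def by (rule card_mono) auto

lemma card_sec2_nbrs_mono:
  "finite V \<Longrightarrow> F \<subseteq> E \<Longrightarrow> card (sec2_nbrs V F x) \<le> card (sec2_nbrs V E x)"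
  unfolding sec2_nbrs_def by (rule card_mono) auto

lemma card_sec2_nbrs_le_max_deg_2sec:
  "finite V \<Longrightarrow> x \<in> V \<Longrightarrow> card (sec2_nbrs V E x) \<le> max_deg_2sec V E"
  unfolding max_deg_2sec_def by (rule Max_ge) auto

lemma chromatic_index_le: "proper_edge_colouring E k c \<Longrightarrow> chromatic_index E \<le> k"
  unfolding chromatic_index_def by (rule Least_le) blast

lemma linear_hg_inter_eq_singleton:
  assumes "linear_hg E" "f \<in> E" "g \<in> E" "f \<noteq> g" "finite f" "y \<in> f" "y \<in> g"
  shows "f \<inter> g = {y}"
proof -
  have "card (f \<inter> g) \<le> 1" using assms(1-4) unfolding linear_hg_def by blast
  moreover have "f \<inter> g \<noteq> {}" "finite (f \<inter> g)" using assms(5-7) by auto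
  ultimately have "card (f \<inter> g) = 1" by (simp add: Suc_leI antisym card_gt_0_iff)
  then obtain z where "f \<inter> g = {z}" by (rule card_1_singletonE)
  with assms(6,7) show ?thesis by auto
qed

lemma hdeg_mult_le_card_sec2_nbrs:
  assumes hg: "hypergraph V E" and lin: "linear_hg E"
    and large: "\<forall>f\<in>E. y \<in> f \<longrightarrow> k \<le> card f"
  shows "(k - 1) * hdeg E y \<le> card (sec2_nbrs V E y)"
proof -
  have fin: "finite V" "finite E" and sub: "\<forall>f\<in>E. f \<subseteq> V"
    using hg unfolding hypergraph_def by auto
  define F where "F = {f\<in>E. y \<in> f}"
  have fin_F: "finite F" and fin_edges: "\<forall>f\<in>F. finite f"
    using fin sub unfolding F_def by (auto intro: finite_subset)
  have disjoint: "\<forall>f\<in>F. \<forall>g\<in>F. f \<noteq> g \<longrightarrow> (f - {y}) \<inter> (g - {y}) = {}"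
    using linear_hg_inter_eq_singleton[OF lin] fin_edges unfolding F_def by blast
  have "(k - 1) * hdeg E y = (\<Sum>f\<in>F. k - 1)"
    unfolding hdeg_def F_def by simp
  also have "\<dots> \<le> (\<Sum>f\<in>F. card (f - {y}))"
    using large fin_edges unfolding F_def by (intro sum_mono) (simp add: diff_le_mono)
  also have "\<dots> = card (\<Union>f\<in>F. f - {y})"
    using card_UN_disjoint[OF fin_F _ disjoint] fin_edges by simp
  also have "\<dots> \<le> card (sec2_nbrs V E y)"
    using fin sub unfolding sec2_nbrs_def F_def by (intro card_mono) auto
  finally show ?thesis .
qed

lemma card_intersecting_edges_le_sum_hdeg:
  assumes "finite E" "e \<in> E" "finite e"
  shows "card (intersecting_edges E e) \<le> (\<Sum>y\<in>e. hdeg E y - 1)"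
proof -
  have "intersecting_edges E e = (\<Union>y\<in>e. {f\<in>E. y \<in> f} - {e})"
    unfolding intersecting_edges_def by auto
  also have "card \<dots> \<le> (\<Sum>y\<in>e. card ({f\<in>E. y \<in> f} - {e}))"
    using assms(3) by (rule card_UN_le)
  also have "\<dots> = (\<Sum>y\<in>e. hdeg E y - 1)"
    using assms unfolding hdeg_def by (intro sum.cong) auto
  finally show ?thesis .
qed

lemma sum_le_if_card_mult_le:
  fixes h :: "'a \<Rightarrow> nat"
  assumes "finite A" "\<forall>y\<in>A. card A * h y \<le> D"
  shows "(\<Sum>y\<in>A. h y) \<le> D"
proof (cases "A = {}")
  case False
  have "card A * (\<Sum>y\<in>A. h y) \<le> card A * D"
    using sum_bounded_above[of A "\<lambda>y. card A * h y" D] assms(2)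
    by (simp add: sum_distrib_left)
  then show ?thesis using False assms(1) by (simp add: card_gt_0_iff)
qed simp

lemma card_intersecting_edges_le:
  assumes hg: "hypergraph V E" and lin: "linear_hg E" and e: "e \<in> E"
    and smallest: "\<forall>f\<in>E. card e \<le> card f" and x: "x \<in> e" "hdeg E x \<le> card e"
    and D: "\<forall>y\<in>V. card (sec2_nbrs V E y) \<le> D"
  shows "card (intersecting_edges E e) \<le> D"
proof -
  have fin: "finite E" "finite e" and "e \<subseteq> V"
    using hg e unfolding hypergraph_def by (auto intro: finite_subset)
  define R where "R = e - {x}"
  have fin_R: "finite R" and card_R: "card R = card e - 1"
    using fin x unfolding R_def by simp_all
  have hdeg_pos: "1 \<le> hdeg E y" if "y \<in> e" for y
    using fin e that unfolding hdeg_def by (auto intro!: Suc_leI card_gt_0_iff[THEN iffD2])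
  have vertex_bound: "(card e - 1) * hdeg E y \<le> D" if "y \<in> e" for y
    using hdeg_mult_le_card_sec2_nbrs[OF hg lin, of y "card e"] smallest D \<open>e \<subseteq> V\<close> that
    by (meson order_trans subsetD)
  have "\<forall>y\<in>R. card R * hdeg E y \<le> D"
    using vertex_bound card_R by (auto simp: R_def)
  then have sum_R: "(\<Sum>y\<in>R. hdeg E y) \<le> D"
    using fin_R sum_le_if_card_mult_le by blast
  have "card (intersecting_edges E e) \<le> (hdeg E x - 1) + (\<Sum>y\<in>R. hdeg E y - 1)"
    using card_intersecting_edges_le_sum_hdeg[OF fin(1) e fin(2)]
      sum.remove[OF fin(2) x(1), of "\<lambda>y. hdeg E y - 1"]
    unfolding R_def by simp
  also have "\<dots> \<le> card R + (\<Sum>y\<in>R. hdeg E y - 1)"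
    using x(2) card_R by simp
  also have "\<dots> = (\<Sum>y\<in>R. 1 + (hdeg E y - 1))"
    by (subst sum.distrib) simp
  also have "\<dots> = (\<Sum>y\<in>R. hdeg E y)"
    unfolding R_def by (intro sum.cong refl) (metis DiffD1 hdeg_pos le_add_diff_inverse)
  finally show ?thesis using sum_R by simp
qed

lemma exists_less_notin:
  fixes A :: "nat set"
  assumes "finite A" "card A < k"
  shows "\<exists>i<k. i \<notin> A"
proof (rule ccontr)
  assume "\<not> (\<exists>i<k. i \<notin> A)"
  then have "{..<k} \<subseteq> A" by auto
  then have "card {..<k} \<le> card A" by (rule card_mono[OF assms(1)])
  with assms(2) show False by simp
qed

lemma proper_edge_colouring_extend:
  assumes "proper_edge_colouring (E - {e}) k c" "i < k" "i \<notin> c ` intersecting_edges E e"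
  shows "proper_edge_colouring E k (c(e := i))"
  using assms unfolding proper_edge_colouring_def intersecting_edges_def
  by (auto simp: Int_commute)

lemma proper_edge_colouring_if_degenerate:
  assumes "finite E"
    and "\<And>F. F \<subseteq> E \<Longrightarrow> F \<noteq> {} \<Longrightarrow> \<exists>e\<in>F. card (intersecting_edges F e) \<le> D"
  shows "\<exists>c. proper_edge_colouring E (D + 1) c"
  using assms(1)
proof (induction E rule: finite_remove_induct)
  case empty
  show ?case unfolding proper_edge_colouring_def by simp
next
  case (remove F)
  obtain e where e: "e \<in> F" and few: "card (intersecting_edges F e) \<le> D"
    using assms(2)[OF remove.hyps(3,2)] by blast
  obtain c where c: "proper_edge_colouring (F - {e}) (D + 1) c"
    using remove.IH[OF e] by blast
  have fin: "finite (intersecting_edges F e)"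
    using remove.hyps(1) unfolding intersecting_edges_def by simp
  have "card (c ` intersecting_edges F e) \<le> card (intersecting_edges F e)"
    using fin by (rule card_image_le)
  with few have "card (c ` intersecting_edges F e) < D + 1" by simp
  then obtain i where "i < D + 1" "i \<notin> c ` intersecting_edges F e"
    using exists_less_notin[OF finite_imageI[OF fin]] by blast
  then show ?case using proper_edge_colouring_extend[OF c] by blast
qed

lemma exists_edge_few_intersecting:
  assumes hg: "hypergraph V E" and lin: "linear_hg E" and "E \<noteq> {}"
    and low_deg: "\<forall>e\<in>E. \<exists>x\<in>e. hdeg E x \<le> card e"
    and D: "\<forall>y\<in>V. card (sec2_nbrs V E y) \<le> D"
  shows "\<exists>e\<in>E. card (intersecting_edges E e) \<le> D"
proof -
  obtain f where "f \<in> E" using \<open>E \<noteq> {}\<close> by blast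
  then obtain e where e: "e \<in> E" and smallest: "\<forall>f\<in>E. card e \<le> card f"
    using ex_has_least_nat[of "\<lambda>f. f \<in> E" f card] by blast
  obtain x where x: "x \<in> e" "hdeg E x \<le> card e"
    using low_deg e by blast
  show ?thesis
    using card_intersecting_edges_le[OF hg lin e smallest x D] e by blast
qed

theorem theorem1p5:
  fixes V :: "'a set" and E :: "'a set set"
  assumes "hypergraph V E"
    and "linear_hg E"
    and "\<forall>e\<in>E. \<exists>x\<in>e. hdeg E x \<le> card e"
  shows "chromatic_index E \<le> max_deg_2sec V E + 1"
proof -
  have fin: "finite V" "finite E" using assms(1) unfolding hypergraph_def by auto
  have "\<exists>e\<in>F. card (intersecting_edges F e) \<le> max_deg_2sec V E"
    if F: "F \<subseteq> E" "F \<noteq> {}" for F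
  proof (rule exists_edge_few_intersecting)
    show "hypergraph V F" using assms(1) F(1) by (rule hypergraph_subset)
    show "linear_hg F" using assms(2) F(1) by (rule linear_hg_subset)
    show "\<forall>e\<in>F. \<exists>x\<in>e. hdeg F x \<le> card e"
      using assms(3) F(1) hdeg_mono[OF fin(2) F(1)] by (meson le_trans subsetD)
    show "\<forall>y\<in>V. card (sec2_nbrs V F y) \<le> max_deg_2sec V E"
      using card_sec2_nbrs_mono[OF fin(1) F(1)] card_sec2_nbrs_le_max_deg_2sec[OF fin(1)]
      by (meson le_trans)
  qed (rule F(2))
  then obtain c where "proper_edge_colouring E (max_deg_2sec V E + 1) c"
    using proper_edge_colouring_if_degenerate[OF fin(2)] by blast
  then show ?thesis by (rule chromatic_index_le)
qed

end
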